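(* Let $x_1,\dots,x_n \in \mathbb{R}^d$, $w \in \mathbb{R}^d$ and $c \in \mathbb{R}$. If $F(w) \geq c$, then $G(w) \geq \frac{1 - \exp(-nc)}{n}$. If additionally $c \leq 1/n$, then $G(w) \geq c/2$.
   Context: $F(w) = \frac{1}{n}\sum_{i=1}^n \log(1+\exp(-\langle w, x_i\rangle))$ and $G(w) = \frac{1}{n}\sum_{i=1}^n \frac{1}{\exp(\langle w, x_i\rangle)+1}$. *)

theory Defs
  imports "HOL-Analysis.Analysis"
begin

definition F :: "nat \<Rightarrow> (nat \<Rightarrow> real ^ 'd) \<Rightarrow> real ^ 'd \<Rightarrow> real" where
  "F n x w = (1 / real n) * (\<Sum>i = 1..n. ln (1 + exp (- (w \<bullet> x i))))"

definition G :: "nat \<Rightarrow> (nat \<Rightarrow> real ^ 'd) \<Rightarrow> real ^ 'd \<Rightarrow> real" where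
  "G n x w = (1 / real n) * (\<Sum>i = 1..n. 1 / (exp (w \<bullet> x i) + 1))"

end

theory Submission
  imports Defs
begin

text \<open>With \<open>g\<^sub>i = 1 / (exp \<langle>w, x\<^sub>i\<rangle> + 1)\<close> and \<open>l\<^sub>i = ln (1 + exp (- \<langle>w, x\<^sub>i\<rangle>))\<close> one has
  \<open>1 - g\<^sub>i = exp (- l\<^sub>i)\<close>, so the Weierstrass product inequality gives
  \<open>\<Sum> g\<^sub>i \<ge> 1 - \<Prod> (1 - g\<^sub>i) = 1 - exp (- n F(w)) \<ge> 1 - exp (- n c)\<close>.
  For \<open>0 \<le> n c \<le> 1\<close>, convexity of \<open>exp\<close> bounds \<open>1 - exp (- n c)\<close> below by \<open>n c / 2\<close>.\<close>

lemma one_minus_inverse_exp_plus_one: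
  fixes z :: real
  shows "1 - 1 / (exp z + 1) = exp (- ln (1 + exp (- z)))"
proof -
  have "exp (- ln (1 + exp (- z))) = 1 / (1 + exp (- z))"
    by (simp add: exp_minus add_pos_pos inverse_eq_divide)
  also have "\<dots> = exp z / (exp z + 1)"
    by (simp add: exp_minus field_simps add_pos_pos)
  also have "\<dots> = 1 - 1 / (exp z + 1)"
    using add_pos_pos[OF exp_gt_zero zero_less_one, of z] by (simp add: field_simps)
  finally show ?thesis ..
qed

lemma sum_inverse_exp_plus_one_ge:
  fixes z :: "'a \<Rightarrow> real"
  assumes "finite A"
  shows "1 - exp (- (\<Sum>i\<in>A. ln (1 + exp (- z i)))) \<le> (\<Sum>i\<in>A. 1 / (exp (z i) + 1))"
proof -
  have "exp (- (\<Sum>i\<in>A. ln (1 + exp (- z i)))) = (\<Prod>i\<in>A. 1 - 1 / (exp (z i) + 1))"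
    using assms by (simp add: one_minus_inverse_exp_plus_one exp_sum[symmetric] sum_negf)
  moreover have "1 - (\<Sum>i\<in>A. 1 / (exp (z i) + 1)) \<le> (\<Prod>i\<in>A. 1 - 1 / (exp (z i) + 1))"
    by (rule Weierstrass_prod_ineq) (simp add: add_pos_pos)
  ultimately show ?thesis by linarith
qed

lemma half_le_one_minus_exp_neg:
  fixes t :: real
  assumes "0 \<le> t" and "t \<le> 1"
  shows "t / 2 \<le> 1 - exp (- t)"
proof -
  have "exp (- t) \<le> (1 - t) * exp 0 + t * exp (- 1)"
    using convex_onD[OF exp_convex, of t 0 "- 1"] assms by simp
  moreover have "exp (- 1 :: real) \<le> 1 / 2"
    using exp_ge_add_one_self[of 1] by (simp add: exp_minus field_simps)
  ultimately show ?thesis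
    using mult_left_mono[of "exp (- 1 :: real)" "1 / 2" t] assms by simp
qed

theorem lemma15:
  fixes n :: nat and x :: "nat \<Rightarrow> real ^ 'd" and w :: "real ^ 'd" and c :: real
  assumes "n \<ge> 1" and "F n x w \<ge> c"
  shows "G n x w \<ge> (1 - exp (- (real n * c))) / real n \<and>
         (c \<le> 1 / real n \<longrightarrow> G n x w \<ge> c / 2)"
proof -
  have n_pos: "real n > 0"
    using assms(1) by simp
  have "real n * c \<le> (\<Sum>i = 1..n. ln (1 + exp (- (w \<bullet> x i))))"
    using assms(2) n_pos by (simp add: F_def field_simps)
  then have "1 - exp (- (real n * c)) \<le> 1 - exp (- (\<Sum>i = 1..n. ln (1 + exp (- (w \<bullet> x i)))))"
    by simp
  also have "\<dots> \<le> real n * G n x w"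
    using sum_inverse_exp_plus_one_ge[of "{1..n}" "\<lambda>i. w \<bullet> x i"] n_pos by (simp add: G_def)
  finally have bound: "1 - exp (- (real n * c)) \<le> real n * G n x w" .
  then have first: "G n x w \<ge> (1 - exp (- (real n * c))) / real n"
    using n_pos by (simp add: field_simps)
  have "G n x w \<ge> c / 2" if "c \<le> 1 / real n"
  proof (cases "c \<ge> 0")
    case True
    have "real n * (c / 2) \<le> 1 - exp (- (real n * c))"
      using half_le_one_minus_exp_neg[of "real n * c"] True that n_pos by (simp add: field_simps)
    with bound have "real n * (c / 2) \<le> real n * G n x w"
      by linarith
    then show ?thesis
      using n_pos by simp
  next
    case False
    have "G n x w \<ge> 0"
      by (simp add: G_def sum_nonneg add_pos_pos)
    then show ?thesis
      using False by linarith
  qed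
  with first show ?thesis by blast
qed

end
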